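(* Let $k_1,\dots,k_{10}$ be smooth functions of $(t,r)$ (the coefficients of a spherically symmetric torsion-free connection with $k_{11}=k_{12}=0$, as in the context), and assume $k_{10}\neq0$. Then the following statements are equivalent: 1. $A=B=C=D=E=F=0$; 2. $[\delta_t,\delta_r]=\alpha\,\delta_w$ for some function $\alpha$ (possibly depending on $(t,r,\dot t,\dot r,w)$), where either $\alpha=0$ or $b=c=0$.
   Context: Coordinates $(t,r,\theta,\phi)$ on a 4-dimensional chart domain, induced velocity coordinates, $w^2=\dot\theta^2+\sin^2\theta\,\dot\phi^2$. The connection has nonzero coefficients $\Gamma^t_{tt}=k_1$, $\Gamma^t_{tr}=k_2$, $\Gamma^t_{rr}=k_3$, $\Gamma^r_{tt}=k_4$, $\Gamma^r_{rr}=k_5$, $\Gamma^r_{tr}=k_6$, $\Gamma^t_{\theta\theta}=k_7$, $\Gamma^t_{\phi\phi}=k_7\sin^2\theta$, $\Gamma^\theta_{\theta t}=\Gamma^\phi_{\phi t}=k_8$, $\Gamma^\theta_{\theta r}=\Gamma^\phi_{\phi r}=k_9$, $\Gamma^r_{\theta\theta}=k_{10}$, $\Gamma^r_{\phi\phi}=k_{10}\sin^2\theta$, $\Gamma^\phi_{\theta\phi}=\cot\theta$, $\Gamma^\theta_{\phi\phi}=-\sin\theta\cos\theta$ (symmetric in lower indices). Vector fields in the variables $(t,r,\dot t,\dot r,w)$: $\delta_t=\partial_t-(k_1\dot t+k_2\dot r)\dot\partial_t-(k_4\dot t+k_6\dot r)\dot\partial_r-k_8w\partial_w$, $\delta_r=\partial_r-(k_2\dot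 t+k_3\dot r)\dot\partial_t-(k_6\dot t+k_5\dot r)\dot\partial_r-k_9w\partial_w$, $\delta_w=wk_7\dot\partial_t+wk_{10}\dot\partial_r+(k_8\dot t+k_9\dot r)\partial_w$. Coefficients (subscripts ${}_{,t},{}_{,r}$ denote partial derivatives): $a_1=k_{1,r}-k_{2,t}+k_3k_4-k_2k_6$, $a_2=k_{2,r}-k_{3,t}+k_2^2+k_3k_6-k_1k_3-k_2k_5$, $a_3=k_{4,r}-k_{6,t}+k_1k_6+k_4k_5-k_2k_4-k_6^2$, $a_4=k_{6,r}-k_{5,t}+k_2k_6-k_3k_4$, $a_5=k_{8,r}-k_{9,t}$. Set $a=k_7/k_{10}$, $b=k_8/k_{10}$, $c=(k_9k_{10}-k_7k_8)/k_{10}^2$ and $A=b(aa_1+a_2)+(ab+c)(aa_3+a_4)-a_5(2ab+c)$, $B=a(aa_3+a_4)-(aa_1+a_2)$, $C=(ab+c)a_3+b(aa_3+a_4)+b(a_1-2a_5)$, $D=aa_3-a_1+a_5$, $E=ba_3$, $F=aa_3-a_1$. *)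

theory Defs
  imports "HOL-Analysis.Analysis"
begin

(* Coinductive = all orders of differentiability. *)
coinductive smooth_on :: "'a::euclidean_space set \<Rightarrow> ('a \<Rightarrow> real) \<Rightarrow> bool" where
  "f differentiable_on U \<Longrightarrow>
   (\<forall>b\<in>Basis. smooth_on U (\<lambda>x. frechet_derivative f (at x) b)) \<Longrightarrow>
   smooth_on U f"

(* Coefficient functions k i : (t,r) \<mapsto> k_i(t,r), i = 1..10 *)
type_synonym coeffs = "nat \<Rightarrow> real \<times> real \<Rightarrow> real"

definition dt :: "(real \<times> real \<Rightarrow> real) \<Rightarrow> real \<times> real \<Rightarrow> real" where
  "dt f x = deriv (\<lambda>s. f (s, snd x)) (fst x)"
definition dr :: "(real \<times> real \<Rightarrow> real) \<Rightarrow> real \<times> real \<Rightarrow> real" where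
  "dr f x = deriv (\<lambda>s. f (fst x, s)) (snd x)"

definition a1 :: "coeffs \<Rightarrow> real \<times> real \<Rightarrow> real" where
  "a1 k x = dr (k 1) x - dt (k 2) x + k 3 x * k 4 x - k 2 x * k 6 x"
definition a2 :: "coeffs \<Rightarrow> real \<times> real \<Rightarrow> real" where
  "a2 k x = dr (k 2) x - dt (k 3) x + (k 2 x)^2 + k 3 x * k 6 x - k 1 x * k 3 x - k 2 x * k 5 x"
definition a3 :: "coeffs \<Rightarrow> real \<times> real \<Rightarrow> real" where
  "a3 k x = dr (k 4) x - dt (k 6) x + k 1 x * k 6 x + k 4 x * k 5 x - k 2 x * k 4 x - (k 6 x)^2"
definition a4 :: "coeffs \<Rightarrow> real \<times> real \<Rightarrow> real" where
  "a4 k x = dr (k 6) x - dt (k 5) x + k 2 x * k 6 x - k 3 x * k 4 x"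
definition a5 :: "coeffs \<Rightarrow> real \<times> real \<Rightarrow> real" where
  "a5 k x = dr (k 8) x - dt (k 9) x"

definition ca :: "coeffs \<Rightarrow> real \<times> real \<Rightarrow> real" where
  "ca k x = k 7 x / k 10 x"
definition cb :: "coeffs \<Rightarrow> real \<times> real \<Rightarrow> real" where
  "cb k x = k 8 x / k 10 x"
definition cc :: "coeffs \<Rightarrow> real \<times> real \<Rightarrow> real" where
  "cc k x = (k 9 x * k 10 x - k 7 x * k 8 x) / (k 10 x)^2"

definition cA :: "coeffs \<Rightarrow> real \<times> real \<Rightarrow> real" where
  "cA k x = (let a = ca k x; b = cb k x; c = cc k x in
     b * (a * a1 k x + a2 k x) + (a * b + c) * (a * a3 k x + a4 k x) - a5 k x * (2 * a * b + c))"
definition cB :: "coeffs \<Rightarrow> real \<times> real \<Rightarrow> real" where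
  "cB k x = (let a = ca k x in a * (a * a3 k x + a4 k x) - (a * a1 k x + a2 k x))"
definition cC :: "coeffs \<Rightarrow> real \<times> real \<Rightarrow> real" where
  "cC k x = (let a = ca k x; b = cb k x; c = cc k x in
     (a * b + c) * a3 k x + b * (a * a3 k x + a4 k x) + b * (a1 k x - 2 * a5 k x))"
definition cD :: "coeffs \<Rightarrow> real \<times> real \<Rightarrow> real" where
  "cD k x = ca k x * a3 k x - a1 k x + a5 k x"
definition cE :: "coeffs \<Rightarrow> real \<times> real \<Rightarrow> real" where
  "cE k x = cb k x * a3 k x"
definition cF :: "coeffs \<Rightarrow> real \<times> real \<Rightarrow> real" where
  "cF k x = ca k x * a3 k x - a1 k x"

(* Points of the 5-dimensional space: p$1 = t, p$2 = r, p$3 = tdot, p$4 = rdot, p$5 = w.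
   Vector fields are given by their coefficient vectors w.r.t.
   (d_t, d_r, d_tdot, d_rdot, d_w). *)
type_synonym pt5 = "real^5"

definition tr :: "pt5 \<Rightarrow> real \<times> real" where
  "tr p = (p$1, p$2)"

definition partial5 :: "5 \<Rightarrow> (pt5 \<Rightarrow> real) \<Rightarrow> pt5 \<Rightarrow> real" where
  "partial5 i f p = deriv (\<lambda>s. f (p + s *\<^sub>R axis i 1)) 0"

definition vf_apply :: "(pt5 \<Rightarrow> pt5) \<Rightarrow> (pt5 \<Rightarrow> real) \<Rightarrow> pt5 \<Rightarrow> real" where
  "vf_apply X f p = (\<Sum>j\<in>UNIV. X p $ j * partial5 j f p)"

definition lie_bracket :: "(pt5 \<Rightarrow> pt5) \<Rightarrow> (pt5 \<Rightarrow> pt5) \<Rightarrow> pt5 \<Rightarrow> pt5" where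
  "lie_bracket X Y p = (\<chi> i. vf_apply X (\<lambda>q. Y q $ i) p - vf_apply Y (\<lambda>q. X q $ i) p)"

definition delta_t :: "coeffs \<Rightarrow> pt5 \<Rightarrow> pt5" where
  "delta_t k p = (let x = tr p; u = p$3; v = p$4; w = p$5 in
     vector [1, 0, -(k 1 x * u + k 2 x * v), -(k 4 x * u + k 6 x * v), - k 8 x * w])"
definition delta_r :: "coeffs \<Rightarrow> pt5 \<Rightarrow> pt5" where
  "delta_r k p = (let x = tr p; u = p$3; v = p$4; w = p$5 in
     vector [0, 1, -(k 2 x * u + k 3 x * v), -(k 6 x * u + k 5 x * v), - k 9 x * w])"
definition delta_w :: "coeffs \<Rightarrow> pt5 \<Rightarrow> pt5" where
  "delta_w k p = (let x = tr p; u = p$3; v = p$4; w = p$5 in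
     vector [0, 0, w * k 7 x, w * k 10 x, k 8 x * u + k 9 x * v])"

definition phase_dom :: "(real \<times> real) set \<Rightarrow> pt5 set" where
  "phase_dom U = {p. tr p \<in> U \<and> p$5 > 0}"

end

theory Submission
  imports Defs
begin

(* The bracket [delta_t, delta_r] is vertical and linear in the fibre coordinates: its
   tdot-, rdot- and w-components are a1 tdot + a2 rdot, a3 tdot + a4 rdot and a5 w, while
   delta_w = (w k7, w k10, k8 tdot + k9 rdot).  Testing proportionality at the fibre points
   (tdot, rdot, w) = (1, 0, 1) and (0, 1, 1) shows that the bracket is a multiple alpha delta_w
   with alpha = 0 or k8 = k9 = 0 exactly when a5 = 0, (a1, a2) = (k7/k10) (a3, a4), and
   k8 = k9 = 0 or a3 = a4 = 0.  As b = c = 0 iff k8 = k9 = 0, the equations A = ... = F = 0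
   are a rearrangement of these conditions. *)

lemma deriv_along_line:
  fixes f :: "'a::real_normed_vector \<Rightarrow> real"
  assumes "(f has_derivative f') (at (x + t *\<^sub>R v))"
  shows "deriv (\<lambda>s. f (x + s *\<^sub>R v)) t = f' v"
proof -
  have "((\<lambda>s. x + s *\<^sub>R v) has_derivative (\<lambda>s. s *\<^sub>R v)) (at t)"
    by (auto intro!: derivative_eq_intros)
  from has_derivative_compose[OF this assms]
  have "((\<lambda>s. f (x + s *\<^sub>R v)) has_derivative (\<lambda>s. f' v * s)) (at t)"
    using linear_scale[OF has_derivative_linear[OF assms]] by (simp add: mult.commute)
  then show ?thesis
    by (intro DERIV_imp_deriv) (simp add: has_field_derivative_def)
qed

lemma has_derivative_imp_vf_apply:
  assumes "(f has_derivative f') (at p)"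
  shows "vf_apply X f p = f' (X p)"
proof -
  have "linear f'" using assms by (rule has_derivative_linear)
  have "vf_apply X f p = (\<Sum>j\<in>UNIV. f' (X p $ j *\<^sub>R axis j 1))"
    unfolding vf_apply_def partial5_def
    using deriv_along_line[where t = 0, simplified, OF assms] linear_scale[OF \<open>linear f'\<close>]
    by simp
  also have "\<dots> = f' (X p)"
    using basis_expansion[of "X p"]
    by (simp add: linear_sum[OF \<open>linear f'\<close>, symmetric] scalar_mult_eq_scaleR)
  finally show ?thesis .
qed

lemma has_derivative_dt_dr:
  fixes g :: "real \<times> real \<Rightarrow> real"
  assumes "g differentiable (at x)"
  shows "(g has_derivative (\<lambda>h. fst h * dt g x + snd h * dr g x)) (at x)"
proof -
  obtain G where G: "(g has_derivative G) (at x)"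
    using assms by (auto simp: differentiable_def)
  have "linear G" using G by (rule has_derivative_linear)
  have dt: "dt g x = G (1, 0)"
    using deriv_along_line[of g G "(0, snd x)" "fst x" "(1, 0)"] G by (simp add: dt_def)
  have dr: "dr g x = G (0, 1)"
    using deriv_along_line[of g G "(fst x, 0)" "snd x" "(0, 1)"] G by (simp add: dr_def)
  have "G = (\<lambda>h. fst h * dt g x + snd h * dr g x)"
  proof
    fix h :: "real \<times> real"
    have "h = fst h *\<^sub>R (1, 0) + snd h *\<^sub>R (0, 1)" by (simp add: prod_eq_iff)
    then have "G h = G (fst h *\<^sub>R (1, 0)) + G (snd h *\<^sub>R (0, 1))"
      by (metis linear_add \<open>linear G\<close>)
    also have "\<dots> = fst h * G (1, 0) + snd h * G (0, 1)"
      by (simp only: linear_scale[OF \<open>linear G\<close>] real_scaleR_def)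
    finally show "G h = fst h * dt g x + snd h * dr g x" by (simp only: dt dr)
  qed
  with G show ?thesis by simp
qed

lemma bounded_linear_tr: "bounded_linear tr"
  unfolding tr_def by (intro bounded_linear_Pair bounded_linear_vec_nth)

lemma has_derivative_tr_comp:
  assumes "g differentiable (at (tr p))"
  shows "((\<lambda>q. g (tr q)) has_derivative (\<lambda>h. h$1 * dt g (tr p) + h$2 * dr g (tr p))) (at p)"
  using has_derivative_compose[OF bounded_linear_imp_has_derivative[OF bounded_linear_tr]
      has_derivative_dt_dr[OF assms]]
  by (simp add: tr_def)

lemma differentiable_tr_comp:
  assumes "g differentiable (at (tr p))"
  shows "(\<lambda>q. g (tr q)) differentiable (at p)"
  by (rule differentiable_compose[OF assms bounded_linear_imp_differentiable[OF bounded_linear_tr]])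

lemma differentiable_vec_nth [simp]: "(\<lambda>q. q $ i) differentiable F"
  by (rule bounded_linear_imp_differentiable) (rule bounded_linear_vec_nth)

lemma vf_apply_const [simp]: "vf_apply X (\<lambda>q. c) p = 0"
  by (simp add: vf_apply_def partial5_def)

lemma vf_apply_vec_nth [simp]: "vf_apply X (\<lambda>q. q $ i) p = X p $ i"
  by (intro has_derivative_imp_vf_apply bounded_linear_imp_has_derivative bounded_linear_vec_nth)

lemma vf_apply_tr_comp:
  "g differentiable (at (tr p)) \<Longrightarrow>
    vf_apply X (\<lambda>q. g (tr q)) p = X p$1 * dt g (tr p) + X p$2 * dr g (tr p)"
  by (rule has_derivative_imp_vf_apply) (rule has_derivative_tr_comp)

lemma vf_apply_add:
  assumes "f differentiable (at p)" "g differentiable (at p)"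
  shows "vf_apply X (\<lambda>q. f q + g q) p = vf_apply X f p + vf_apply X g p"
proof -
  from assms obtain f' g' where f: "(f has_derivative f') (at p)" and g: "(g has_derivative g') (at p)"
    by (auto simp: differentiable_def)
  show ?thesis
    using has_derivative_imp_vf_apply[OF has_derivative_add[OF f g]]
    by (simp add: has_derivative_imp_vf_apply[OF f] has_derivative_imp_vf_apply[OF g])
qed

lemma vf_apply_diff:
  assumes "f differentiable (at p)" "g differentiable (at p)"
  shows "vf_apply X (\<lambda>q. f q - g q) p = vf_apply X f p - vf_apply X g p"
proof -
  from assms obtain f' g' where f: "(f has_derivative f') (at p)" and g: "(g has_derivative g') (at p)"
    by (auto simp: differentiable_def)
  show ?thesis
    using has_derivative_imp_vf_apply[OF has_derivative_diff[OF f g]]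
    by (simp add: has_derivative_imp_vf_apply[OF f] has_derivative_imp_vf_apply[OF g])
qed

lemma vf_apply_minus:
  assumes "f differentiable (at p)"
  shows "vf_apply X (\<lambda>q. - f q) p = - vf_apply X f p"
proof -
  from assms obtain f' where f: "(f has_derivative f') (at p)"
    by (auto simp: differentiable_def)
  show ?thesis
    using has_derivative_imp_vf_apply[OF has_derivative_minus[OF f]]
    by (simp add: has_derivative_imp_vf_apply[OF f])
qed

lemma vf_apply_mult:
  assumes "f differentiable (at p)" "g differentiable (at p)"
  shows "vf_apply X (\<lambda>q. f q * g q) p = f p * vf_apply X g p + vf_apply X f p * g p"
proof -
  from assms obtain f' g' where f: "(f has_derivative f') (at p)" and g: "(g has_derivative g') (at p)"
    by (auto simp: differentiable_def)
  show ?thesis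
    using has_derivative_imp_vf_apply[OF has_derivative_mult[OF f g]]
    by (simp add: has_derivative_imp_vf_apply[OF f] has_derivative_imp_vf_apply[OF g])
qed

lemma vector_5_nth [simp]:
  "(vector [x1, x2, x3, x4, x5] :: 'a::zero^5) $ 1 = x1"
  "(vector [x1, x2, x3, x4, x5] :: 'a::zero^5) $ 2 = x2"
  "(vector [x1, x2, x3, x4, x5] :: 'a::zero^5) $ 3 = x3"
  "(vector [x1, x2, x3, x4, x5] :: 'a::zero^5) $ 4 = x4"
  "(vector [x1, x2, x3, x4, x5] :: 'a::zero^5) $ 5 = x5"
  by (simp_all add: vector_def)

lemma forall_5: "(\<forall>i::5. P i) \<longleftrightarrow> P 1 \<and> P 2 \<and> P 3 \<and> P 4 \<and> P 5"
proof -
  have "i = 1 \<or> i = 2 \<or> i = 3 \<or> i = 4 \<or> i = 5" for i :: 5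
  proof (induct i)
    case (of_int z)
    then have "z = 0 \<or> z = 1 \<or> z = 2 \<or> z = 3 \<or> z = 4" by auto
    then show ?case by auto
  qed
  then show ?thesis by metis
qed

lemma lie_bracket_delta_t_delta_r:
  assumes "\<forall>i\<in>{1..10}. k i differentiable (at (tr p))"
  shows "lie_bracket (delta_t k) (delta_r k) p =
    vector [0, 0, a1 k (tr p) * p$3 + a2 k (tr p) * p$4,
                  a3 k (tr p) * p$3 + a4 k (tr p) * p$4, a5 k (tr p) * p$5]"
proof -
  have [simp]: "k i differentiable (at (tr p))" "(\<lambda>q. k i (tr q)) differentiable (at p)"
    if "i \<in> {1..10}" for i
    using assms that by (auto intro: differentiable_tr_comp)
  show ?thesis
    unfolding vec_eq_iff forall_5
    by (simp add: lie_bracket_def delta_t_def delta_r_def Let_def vf_apply_add vf_apply_diff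
        vf_apply_minus vf_apply_mult vf_apply_tr_comp a1_def a2_def a3_def a4_def a5_def
        algebra_simps power2_eq_square)
qed

definition bracket_eq_scaled_delta_w :: "coeffs \<Rightarrow> real \<times> real \<Rightarrow> real \<Rightarrow> real \<Rightarrow> real \<Rightarrow> real \<Rightarrow> bool"
  where "bracket_eq_scaled_delta_w k x u v w \<alpha> \<longleftrightarrow>
    a1 k x * u + a2 k x * v = \<alpha> * (w * k 7 x) \<and>
    a3 k x * u + a4 k x * v = \<alpha> * (w * k 10 x) \<and>
    a5 k x * w = \<alpha> * (k 8 x * u + k 9 x * v)"

lemma lie_bracket_eq_scaleR_delta_w_iff:
  assumes "\<forall>i\<in>{1..10}. k i differentiable (at (tr p))"
  shows "lie_bracket (delta_t k) (delta_r k) p = \<alpha> *\<^sub>R delta_w k p \<longleftrightarrow>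
    bracket_eq_scaled_delta_w k (tr p) (p$3) (p$4) (p$5) \<alpha>"
  unfolding lie_bracket_delta_t_delta_r[OF assms] bracket_eq_scaled_delta_w_def vec_eq_iff forall_5
  by (simp add: delta_w_def Let_def)

lemma ball_phase_dom_iff:
  "(\<forall>p\<in>phase_dom U. P (tr p) (p$3) (p$4) (p$5)) \<longleftrightarrow> (\<forall>x\<in>U. \<forall>u v w. 0 < w \<longrightarrow> P x u v w)"
proof
  assume P: "\<forall>p\<in>phase_dom U. P (tr p) (p$3) (p$4) (p$5)"
  show "\<forall>x\<in>U. \<forall>u v w. 0 < w \<longrightarrow> P x u v w"
  proof (intro ballI allI impI)
    fix x u v w assume "x \<in> U" "0 < (w::real)"
    then have "vector [fst x, snd x, u, v, w] \<in> phase_dom U"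
      by (simp add: phase_dom_def tr_def)
    then show "P x u v w" using P by (force simp: tr_def)
  qed
qed (simp add: phase_dom_def)

lemma fibre_bracket_eq_scaled_delta_w_iff:
  assumes "k 10 x \<noteq> 0"
  shows "(\<forall>u v w. 0 < w \<longrightarrow>
            (\<exists>\<alpha>. bracket_eq_scaled_delta_w k x u v w \<alpha> \<and> (\<alpha> = 0 \<or> k 8 x = 0 \<and> k 9 x = 0)))
    \<longleftrightarrow> a5 k x = 0 \<and> a1 k x = ca k x * a3 k x \<and> a2 k x = ca k x * a4 k x \<and>
        (k 8 x = 0 \<and> k 9 x = 0 \<or> a3 k x = 0 \<and> a4 k x = 0)"
  (is "?fibres \<longleftrightarrow> ?coeffs")
proof
  assume ?fibres
  then obtain \<alpha> \<beta> where
    \<alpha>: "bracket_eq_scaled_delta_w k x 1 0 1 \<alpha>" "\<alpha> = 0 \<or> k 8 x = 0 \<and> k 9 x = 0" and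
    \<beta>: "bracket_eq_scaled_delta_w k x 0 1 1 \<beta>" "\<beta> = 0 \<or> k 8 x = 0 \<and> k 9 x = 0"
    by (meson zero_less_one)
  then show ?coeffs
    using assms by (auto simp: bracket_eq_scaled_delta_w_def ca_def)
next
  assume ?coeffs
  show ?fibres
  proof (intro allI impI)
    fix u v w :: real
    assume "0 < w"
    show "\<exists>\<alpha>. bracket_eq_scaled_delta_w k x u v w \<alpha> \<and> (\<alpha> = 0 \<or> k 8 x = 0 \<and> k 9 x = 0)"
    proof (cases "k 8 x = 0 \<and> k 9 x = 0")
      case True
      with \<open>?coeffs\<close> \<open>0 < w\<close> assms show ?thesis
        by (intro exI[of _ "(a3 k x * u + a4 k x * v) / (w * k 10 x)"])
          (auto simp: bracket_eq_scaled_delta_w_def ca_def field_simps)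
    next
      case False
      with \<open>?coeffs\<close> show ?thesis
        by (intro exI[of _ 0]) (auto simp: bracket_eq_scaled_delta_w_def)
    qed
  qed
qed

lemma coefficient_equations_iff:
  fixes a b c e1 e2 e3 e4 e5 :: real
  shows "(b * (a * e1 + e2) + (a * b + c) * (a * e3 + e4) - e5 * (2 * a * b + c) = 0 \<and>
          a * (a * e3 + e4) - (a * e1 + e2) = 0 \<and>
          (a * b + c) * e3 + b * (a * e3 + e4) + b * (e1 - 2 * e5) = 0 \<and>
          a * e3 - e1 + e5 = 0 \<and> b * e3 = 0 \<and> a * e3 - e1 = 0)
    \<longleftrightarrow> e5 = 0 \<and> e1 = a * e3 \<and> e2 = a * e4 \<and> (b = 0 \<and> c = 0 \<or> e3 = 0 \<and> e4 = 0)"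
  (is "?A \<and> ?B \<and> ?C \<and> ?D \<and> ?E \<and> ?F \<longleftrightarrow> _")
proof
  assume eqs: "?A \<and> ?B \<and> ?C \<and> ?D \<and> ?E \<and> ?F"
  then have e5: "e5 = 0" and e1: "e1 = a * e3" and e2: "e2 = a * e4"
    by (auto simp: algebra_simps)
  moreover have "e3 = 0 \<and> e4 = 0" if "b \<noteq> 0 \<or> c \<noteq> 0"
  proof (cases "b = 0")
    case False
    then have "e3 = 0" using eqs by simp
    moreover from this have "b * e4 = 0" using eqs e1 e5 by simp
    ultimately show ?thesis using False by simp
  next
    case True
    then have "c \<noteq> 0" using that by simp
    then have "e3 = 0" using eqs True by simp
    moreover from this have "c * e4 = 0" using eqs True e5 by simp
    ultimately show ?thesis using \<open>c \<noteq> 0\<close> by simp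
  qed
  ultimately show "e5 = 0 \<and> e1 = a * e3 \<and> e2 = a * e4 \<and> (b = 0 \<and> c = 0 \<or> e3 = 0 \<and> e4 = 0)"
    by blast
qed (auto simp: algebra_simps)

lemma cb_cc_eq_0_iff: "k 10 x \<noteq> 0 \<Longrightarrow> cb k x = 0 \<and> cc k x = 0 \<longleftrightarrow> k 8 x = 0 \<and> k 9 x = 0"
  by (auto simp: cb_def cc_def)

lemma cA_cB_cC_cD_cE_cF_eq_0_iff:
  assumes "k 10 x \<noteq> 0"
  shows "(cA k x = 0 \<and> cB k x = 0 \<and> cC k x = 0 \<and> cD k x = 0 \<and> cE k x = 0 \<and> cF k x = 0)
    \<longleftrightarrow> a5 k x = 0 \<and> a1 k x = ca k x * a3 k x \<and> a2 k x = ca k x * a4 k x \<and>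
        (k 8 x = 0 \<and> k 9 x = 0 \<or> a3 k x = 0 \<and> a4 k x = 0)"
  unfolding cA_def cB_def cC_def cD_def cE_def cF_def Let_def coefficient_equations_iff
    cb_cc_eq_0_iff[of k x, OF assms] ..

lemma smooth_on_imp_differentiable:
  "open U \<Longrightarrow> smooth_on U f \<Longrightarrow> x \<in> U \<Longrightarrow> f differentiable (at x)"
  by (metis smooth_on.cases differentiable_on_eq_differentiable_at)

theorem lemma3:
  fixes k :: "nat \<Rightarrow> real \<times> real \<Rightarrow> real" and U :: "(real \<times> real) set"
  assumes "open U"
    and "\<forall>i\<in>{1..10}. smooth_on U (k i)"
    and "\<forall>x\<in>U. k 10 x \<noteq> 0"
  shows "(\<forall>x\<in>U. cA k x = 0 \<and> cB k x = 0 \<and> cC k x = 0 \<and> cD k x = 0 \<and> cE k x = 0 \<and> cF k x = 0)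
     \<longleftrightarrow> (\<exists>\<alpha> :: real^5 \<Rightarrow> real. \<forall>p\<in>phase_dom U.
            lie_bracket (delta_t k) (delta_r k) p = \<alpha> p *\<^sub>R delta_w k p
            \<and> (\<alpha> p = 0 \<or> (cb k (tr p) = 0 \<and> cc k (tr p) = 0)))"
proof -
  have diff: "\<forall>i\<in>{1..10}. k i differentiable (at (tr p))" if "p \<in> phase_dom U" for p
    using assms(1,2) that by (auto simp: phase_dom_def intro: smooth_on_imp_differentiable)
  have "(\<forall>x\<in>U. cA k x = 0 \<and> cB k x = 0 \<and> cC k x = 0 \<and> cD k x = 0 \<and> cE k x = 0 \<and> cF k x = 0)
    \<longleftrightarrow> (\<forall>x\<in>U. \<forall>u v w. 0 < w \<longrightarrow>
          (\<exists>\<alpha>. bracket_eq_scaled_delta_w k x u v w \<alpha> \<and> (\<alpha> = 0 \<or> k 8 x = 0 \<and> k 9 x = 0)))"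
    using assms(3) by (simp add: cA_cB_cC_cD_cE_cF_eq_0_iff fibre_bracket_eq_scaled_delta_w_iff)
  also have "\<dots> \<longleftrightarrow> (\<forall>p\<in>phase_dom U. \<exists>\<alpha>. bracket_eq_scaled_delta_w k (tr p) (p$3) (p$4) (p$5) \<alpha> \<and>
          (\<alpha> = 0 \<or> k 8 (tr p) = 0 \<and> k 9 (tr p) = 0))"
    by (rule ball_phase_dom_iff[symmetric])
  also have "\<dots> \<longleftrightarrow> (\<forall>p\<in>phase_dom U. \<exists>\<alpha>. lie_bracket (delta_t k) (delta_r k) p = \<alpha> *\<^sub>R delta_w k p \<and>
          (\<alpha> = 0 \<or> cb k (tr p) = 0 \<and> cc k (tr p) = 0))"
    using assms(3) diff
    by (intro ball_cong) (auto simp: phase_dom_def lie_bracket_eq_scaleR_delta_w_iff cb_cc_eq_0_iff)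
  finally show ?thesis
    by (simp only: bchoice_iff)
qed

end
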